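(* Let $X$ be a continuous random variable with probability density function $f$ (vanishing outside its support) whose support is the interval $(L,R)$, $-\infty\le L<R\le\infty$, and let $p\in\mathcal{D}=\{p\ge1:E[|X|^{p-1}]<\infty\}$ with $p$-mean $\nu_p$. Suppose there exists $c>0$ such that $f(\nu_p-c)=f(\nu_p+c)$, $f(\nu_p-x)>f(\nu_p+x)$ for $x\in(0,c)$, and $f(\nu_p-x)<f(\nu_p+x)$ for $x>c$. Suppose also that $\nu_p-L\le R-\nu_p$. Let $H_p=\int_0^{\nu_p-L} y^{p-1} f(\nu_p-y)\,dy$. Then a random variable with density $\frac{1}{H_p}y^{p-1}f(\nu_p+y)\mathbf{1}_{(0,R-\nu_p)}(y)$ exhibits strict stochastic dominance over a random variable with density $\frac{1}{H_p}y^{p-1}f(\nu_p-y)\mathbf{1}_{(0,\nu_p-L)}(y)$.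
   Context: For $p\ge 1$ and a continuous random variable $X$ with $E[|X|^{p-1}]<\infty$, the $p$-mean $\nu_p$ is the unique real solution $\nu$ of $E[(X-\nu)_+^{p-1}]=E[(\nu-X)_+^{p-1}]$; equivalently $\int_0^{\nu_p-L} y^{p-1} f(\nu_p-y)\,dy=\int_0^{R-\nu_p} y^{p-1} f(\nu_p+y)\,dy$, so both displayed functions are probability densities. A random variable $Y$ with CDF $F_Y$ exhibits strict stochastic dominance over $Z$ with CDF $F_Z$ if $F_Z(x)\ge F_Y(x)$ for all $x$ and $F_Z\not\equiv F_Y$. *)

theory Defs
  imports "HOL-Analysis.Analysis"
begin

definition is_density :: "(real \<Rightarrow> real) \<Rightarrow> bool" where
  "is_density f \<longleftrightarrow> f \<in> borel_measurable lborel \<and> (\<forall>x. 0 \<le> f x)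
     \<and> integrable lborel f \<and> integral\<^sup>L lborel f = 1"

definition support_interval :: "(real \<Rightarrow> real) \<Rightarrow> ereal \<Rightarrow> ereal \<Rightarrow> bool" where
  "support_interval f L R \<longleftrightarrow> L < R
     \<and> (\<forall>x. \<not> (L < ereal x \<and> ereal x < R) \<longrightarrow> f x = 0)
     \<and> (\<forall>a b. L \<le> ereal a \<and> a < b \<and> ereal b \<le> R \<longrightarrow> (LINT x:{a<..<b}|lborel. f x) > 0)"

definition in_D :: "(real \<Rightarrow> real) \<Rightarrow> real \<Rightarrow> bool" where
  "in_D f p \<longleftrightarrow> 1 \<le> p \<and> integrable lborel (\<lambda>x. \<bar>x\<bar> powr (p - 1) * f x)"

text \<open>nu is the p-mean: E[(X-nu)_+^(p-1)] = E[(nu-X)_+^(p-1)].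
  (powr convention 0 powr 0 = 0 makes the case p = 1 the median condition.)\<close>
definition is_pmean :: "(real \<Rightarrow> real) \<Rightarrow> real \<Rightarrow> real \<Rightarrow> bool" where
  "is_pmean f p \<nu> \<longleftrightarrow>
     (LINT x|lborel. (max (x - \<nu>) 0) powr (p - 1) * f x)
   = (LINT x|lborel. (max (\<nu> - x) 0) powr (p - 1) * f x)"

definition cdf_of_density :: "(real \<Rightarrow> real) \<Rightarrow> real \<Rightarrow> real" where
  "cdf_of_density g x = (LINT y:{..x}|lborel. g y)"

definition strict_stoch_dom :: "(real \<Rightarrow> real) \<Rightarrow> (real \<Rightarrow> real) \<Rightarrow> bool" where
  "strict_stoch_dom FY FZ \<longleftrightarrow> (\<forall>x. FZ x \<ge> FY x) \<and> FZ \<noteq> FY"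

end

theory Submission
  imports Defs
begin

text \<open>Writing a and b for the two unnormalised densities, the p-mean condition says exactly
  that a and b have the same total mass H. The hypotheses on f say that a - b is nonnegative
  on (0, c], strictly positive on (0, c) and nonpositive beyond c. Hence the CDF of a
  dominates that of b on (-\<infinity>, c] by direct comparison, and beyond c because both
  CDFs are H minus their upper tails, where the comparison is reversed. At c the
  inequality is strict, and this also shows H > 0.\<close>

definition power_weighted :: "real \<Rightarrow> (real \<Rightarrow> real) \<Rightarrow> real \<Rightarrow> real" where
  "power_weighted q g y = indicator {0<..} y * (y powr q * g y)"

lemma power_weighted_nonneg: "(\<And>y. 0 \<le> g y) \<Longrightarrow> 0 \<le> power_weighted q g y"
  by (simp add: power_weighted_def)

lemma power_weighted_mono:
  "(0 < y \<Longrightarrow> g y \<le> h y) \<Longrightarrow> power_weighted q g y \<le> power_weighted q h y"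
  by (simp add: power_weighted_def indicator_def mult_left_mono)

lemma power_weighted_strict_mono:
  "0 < y \<Longrightarrow> g y < h y \<Longrightarrow> power_weighted q g y < power_weighted q h y"
  by (simp add: power_weighted_def)

lemma powr_le_two_powr_abs_add:
  fixes q x v w :: real
  assumes "0 \<le> q" "0 \<le> w" "w \<le> \<bar>v - x\<bar>"
  shows "w powr q \<le> 2 powr q * (\<bar>x\<bar> powr q + \<bar>v\<bar> powr q)"
proof -
  have "w powr q \<le> (2 * max \<bar>x\<bar> \<bar>v\<bar>) powr q"
    by (rule powr_mono2) (use assms in auto)
  also have "\<dots> = 2 powr q * max \<bar>x\<bar> \<bar>v\<bar> powr q"
    by (simp add: powr_mult)
  also have "max \<bar>x\<bar> \<bar>v\<bar> powr q \<le> \<bar>x\<bar> powr q + \<bar>v\<bar> powr q"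
    by (simp add: max_def)
  finally show ?thesis
    by (simp add: mult_left_mono)
qed

lemma integrable_powr_dist_mult:
  fixes f h :: "real \<Rightarrow> real"
  assumes q: "0 \<le> q"
    and f: "integrable lborel f" "\<And>x. 0 \<le> f x"
    and moment: "integrable lborel (\<lambda>x. \<bar>x\<bar> powr q * f x)"
    and h[measurable]: "h \<in> borel_measurable borel"
    and h_bound: "\<And>x. 0 \<le> h x" "\<And>x. h x \<le> \<bar>v - x\<bar>"
  shows "integrable lborel (\<lambda>x. h x powr q * f x)"
proof (rule Bochner_Integration.integrable_bound)
  show "integrable lborel (\<lambda>x. 2 powr q * (\<bar>x\<bar> powr q * f x + \<bar>v\<bar> powr q * f x))"
    using moment f by auto
  have [measurable]: "f \<in> borel_measurable borel"
    using f by (simp add: borel_measurable_integrable)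
  show "(\<lambda>x. h x powr q * f x) \<in> borel_measurable lborel"
    by measurable
  have "h x powr q * f x \<le> 2 powr q * (\<bar>x\<bar> powr q + \<bar>v\<bar> powr q) * f x" for x
    by (rule mult_right_mono[OF powr_le_two_powr_abs_add]) (use q f h_bound in auto)
  then show "AE x in lborel. norm (h x powr q * f x)
      \<le> norm (2 powr q * (\<bar>x\<bar> powr q * f x + \<bar>v\<bar> powr q * f x))"
    using f(2) by (simp add: algebra_simps)
qed

lemma power_weighted_reflect:
  fixes f :: "real \<Rightarrow> real" and s :: real
  assumes s: "\<bar>s\<bar> = 1"
    and int: "integrable lborel (\<lambda>x. max (s * (x - \<nu>)) 0 powr q * f x)"
  shows "integrable lborel (power_weighted q (\<lambda>y. f (\<nu> + s * y)))"
    and "integral\<^sup>L lborel (power_weighted q (\<lambda>y. f (\<nu> + s * y)))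
       = (LINT x|lborel. max (s * (x - \<nu>)) 0 powr q * f x)"
proof -
  define g where "g = (\<lambda>x. max (s * (x - \<nu>)) 0 powr q * f x)"
  have "s * s = 1"
    using s by (metis abs_mult_self_eq mult_1)
  then have shift: "power_weighted q (\<lambda>y. f (\<nu> + s * y)) = (\<lambda>y. g (\<nu> + s * y))"
    by (auto simp: power_weighted_def g_def fun_eq_iff indicator_def max_def mult.assoc[symmetric])
  have "s \<noteq> 0"
    using s by auto
  then show "integrable lborel (power_weighted q (\<lambda>y. f (\<nu> + s * y)))"
    unfolding shift by (rule lborel_integrable_real_affine[OF int[folded g_def]])
  show "integral\<^sup>L lborel (power_weighted q (\<lambda>y. f (\<nu> + s * y))) = integral\<^sup>L lborel g"
    unfolding shift using lborel_integral_real_affine[OF \<open>s \<noteq> 0\<close>, of g \<nu>] s by simp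
qed

lemma pmean_power_weighted_integrals:
  assumes dens: "is_density f" and pD: "in_D f p" and pmean: "is_pmean f p \<nu>"
  shows "integrable lborel (power_weighted (p - 1) (\<lambda>y. f (\<nu> - y)))"
    and "integrable lborel (power_weighted (p - 1) (\<lambda>y. f (\<nu> + y)))"
    and "integral\<^sup>L lborel (power_weighted (p - 1) (\<lambda>y. f (\<nu> - y)))
       = integral\<^sup>L lborel (power_weighted (p - 1) (\<lambda>y. f (\<nu> + y)))"
proof -
  have "integrable lborel (\<lambda>x. max (s * (x - \<nu>)) 0 powr (p - 1) * f x)" if "\<bar>s\<bar> = 1" for s
  proof (rule integrable_powr_dist_mult[of _ _ _ \<nu>])
    show "max (s * (x - \<nu>)) 0 \<le> \<bar>\<nu> - x\<bar>" for x
      using abs_ge_self[of "s * (x - \<nu>)"] that by (simp add: abs_mult abs_minus_commute)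
  qed (use dens pD in \<open>auto simp: is_density_def in_D_def\<close>)
  note reflect = power_weighted_reflect[OF _ this, of 1, simplified]
    power_weighted_reflect[OF _ this, of "-1", simplified]
  then show "integrable lborel (power_weighted (p - 1) (\<lambda>y. f (\<nu> - y)))"
    and "integrable lborel (power_weighted (p - 1) (\<lambda>y. f (\<nu> + y)))"
    by auto
  show "integral\<^sup>L lborel (power_weighted (p - 1) (\<lambda>y. f (\<nu> - y)))
      = integral\<^sup>L lborel (power_weighted (p - 1) (\<lambda>y. f (\<nu> + y)))"
    using reflect pmean by (simp add: is_pmean_def)
qed

lemma support_interval_unbounded_above:
  assumes "support_interval f L R" and "\<And>x. c < x \<Longrightarrow> f x \<noteq> 0"
  shows "R = \<infinity>"
proof (rule ccontr)
  assume "R \<noteq> \<infinity>"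
  moreover have "R \<noteq> -\<infinity>"
    using assms(1) by (auto simp: support_interval_def)
  ultimately obtain r where r: "R = ereal r"
    by (cases R) auto
  have "\<not> ereal (max c r + 1) < R"
    using r by simp
  then have "f (max c r + 1) = 0"
    using assms(1) by (simp add: support_interval_def)
  moreover have "c < max c r + 1"
    by (simp add: max_def)
  ultimately show False
    using assms(2) by blast
qed

lemma support_interval_vanishes_left:
  assumes "support_interval f L R" and "ereal \<nu> - L \<le> ereal y"
  shows "f (\<nu> - y) = 0"
proof -
  have "\<not> L < ereal (\<nu> - y)"
    using assms(2) by (cases L) auto
  then show ?thesis
    using assms(1) by (simp add: support_interval_def)
qed

lemma set_integrable_lborel_of_integrable:
  fixes g :: "real \<Rightarrow> real"
  shows "integrable lborel g \<Longrightarrow> A \<in> sets borel \<Longrightarrow> set_integrable lborel A g"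
  unfolding set_integrable_def by (rule integrable_mult_indicator) auto

lemma cdf_of_density_eq_integral_minus_tail:
  fixes g :: "real \<Rightarrow> real"
  assumes "integrable lborel g"
  shows "cdf_of_density g x = integral\<^sup>L lborel g - (LINT y:{x<..}|lborel. g y)"
proof -
  have "{..x} \<union> {x<..} = (UNIV :: real set)"
    by auto
  then have "integral\<^sup>L lborel g = (LINT y:{..x} \<union> {x<..}|lborel. g y)"
    using set_integral_space[OF assms] by simp
  also have "\<dots> = cdf_of_density g x + (LINT y:{x<..}|lborel. g y)"
    unfolding cdf_of_density_def
    by (rule set_integral_Un) (auto intro: set_integrable_lborel_of_integrable assms)
  finally show ?thesis
    by simp
qed

lemma cdf_of_density_bounds:
  fixes g :: "real \<Rightarrow> real"
  assumes "integrable lborel g" "\<And>y. 0 \<le> g y"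
  shows "0 \<le> cdf_of_density g x" and "cdf_of_density g x \<le> integral\<^sup>L lborel g"
proof -
  have "0 \<le> (LINT y:{x<..}|lborel. g y)"
    using assms(2) unfolding set_lebesgue_integral_def by (simp add: Bochner_Integration.integral_nonneg)
  then show "cdf_of_density g x \<le> integral\<^sup>L lborel g"
    using cdf_of_density_eq_integral_minus_tail[OF assms(1)] by simp
  show "0 \<le> cdf_of_density g x"
    using assms(2) unfolding cdf_of_density_def set_lebesgue_integral_def
    by (simp add: Bochner_Integration.integral_nonneg)
qed

lemma cdf_of_density_le_if_single_crossing:
  fixes a b :: "real \<Rightarrow> real"
  assumes a: "integrable lborel a" and b: "integrable lborel b"
    and mass: "integral\<^sup>L lborel a = integral\<^sup>L lborel b"
    and below: "\<And>y. y \<le> c \<Longrightarrow> b y \<le> a y"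
    and above: "\<And>y. c < y \<Longrightarrow> a y \<le> b y"
  shows "cdf_of_density b x \<le> cdf_of_density a x"
proof (cases "x \<le> c")
  case True
  then show ?thesis
    unfolding cdf_of_density_def
    by (intro set_integral_mono set_integrable_lborel_of_integrable a b below) auto
next
  case False
  have "(LINT y:{x<..}|lborel. a y) \<le> (LINT y:{x<..}|lborel. b y)"
    using False by (intro set_integral_mono set_integrable_lborel_of_integrable a b above) auto
  then show ?thesis
    using mass by (simp add: cdf_of_density_eq_integral_minus_tail a b)
qed

lemma integral_less_if_less_on_interval:
  fixes g h :: "real \<Rightarrow> real"
  assumes g: "integrable lborel g" and h: "integrable lborel h"
    and le: "\<And>y. g y \<le> h y" and less: "\<And>y. s < y \<Longrightarrow> y < t \<Longrightarrow> g y < h y"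
    and "s < t"
  shows "integral\<^sup>L lborel g < integral\<^sup>L lborel h"
proof -
  have "integral\<^sup>L lborel (\<lambda>y. h y - g y) \<noteq> 0"
  proof
    assume "integral\<^sup>L lborel (\<lambda>y. h y - g y) = 0"
    then have "AE y in lborel. h y - g y = 0"
      using integral_nonneg_eq_0_iff_AE[of lborel "\<lambda>y. h y - g y"] g h le by simp
    then have "AE y in lborel. y \<notin> {s<..<t}"
      by eventually_elim (use less in fastforce)
    then have "emeasure lborel {s<..<t} = 0"
      by (subst (asm) AE_iff_measurable[of "{s<..<t}"]) auto
    with \<open>s < t\<close> show False
      by simp
  qed
  moreover have "integral\<^sup>L lborel g \<le> integral\<^sup>L lborel h"
    using g h le by (rule integral_mono)
  ultimately show ?thesis
    using g h by simp
qed

lemma cdf_of_density_less: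
  fixes a b :: "real \<Rightarrow> real"
  assumes a: "integrable lborel a" and b: "integrable lborel b"
    and le: "\<And>y. y \<le> c \<Longrightarrow> b y \<le> a y" and less: "\<And>y. s < y \<Longrightarrow> y < c \<Longrightarrow> b y < a y"
    and "s < c"
  shows "cdf_of_density b c < cdf_of_density a c"
  unfolding cdf_of_density_def set_lebesgue_integral_def
proof (rule integral_less_if_less_on_interval[OF _ _ _ _ \<open>s < c\<close>])
  show "integrable lborel (\<lambda>y. indicator {..c} y *\<^sub>R b y)"
    and "integrable lborel (\<lambda>y. indicator {..c} y *\<^sub>R a y)"
    using integrable_mult_indicator[of "{..c}" lborel a] integrable_mult_indicator[of "{..c}" lborel b]
      a b by simp_all
qed (use le less in \<open>auto simp: indicator_def\<close>)

lemma strict_stoch_dom_cdf_of_density_divide: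
  fixes a b :: "real \<Rightarrow> real"
  assumes "0 < H" "\<And>x. cdf_of_density b x \<le> cdf_of_density a x"
    and "cdf_of_density b c < cdf_of_density a c"
  shows "strict_stoch_dom (cdf_of_density (\<lambda>y. b y / H)) (cdf_of_density (\<lambda>y. a y / H))"
proof -
  have divide: "cdf_of_density (\<lambda>y. g y / H) = (\<lambda>x. cdf_of_density g x / H)" for g
    by (simp add: cdf_of_density_def fun_eq_iff)
  show ?thesis
    unfolding strict_stoch_dom_def divide using assms
    by (auto simp: divide_right_mono fun_eq_iff intro!: exI[of _ c])
qed

theorem lemma2:
  fixes f :: "real \<Rightarrow> real" and L R :: ereal and p \<nu> c :: real
  assumes dens: "is_density f"
    and supp: "support_interval f L R"
    and pD: "in_D f p"
    and nu: "is_pmean f p \<nu>"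
    and c_pos: "c > 0"
    and eq_c: "f (\<nu> - c) = f (\<nu> + c)"
    and gt: "\<forall>x. 0 < x \<and> x < c \<longrightarrow> f (\<nu> - x) > f (\<nu> + x)"
    and lt: "\<forall>x. x > c \<longrightarrow> f (\<nu> - x) < f (\<nu> + x)"
    and LR: "ereal \<nu> - L \<le> R - ereal \<nu>"
  defines "H \<equiv> LINT y:{y. 0 < y \<and> ereal y < ereal \<nu> - L}|lborel. y powr (p - 1) * f (\<nu> - y)"
  shows "strict_stoch_dom
           (cdf_of_density (\<lambda>y. indicator {y. 0 < y \<and> ereal y < R - ereal \<nu>} y
                                   * (y powr (p - 1) * f (\<nu> + y)) / H))
           (cdf_of_density (\<lambda>y. indicator {y. 0 < y \<and> ereal y < ereal \<nu> - L} y
                                   * (y powr (p - 1) * f (\<nu> - y)) / H))"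
proof -
  have f_nonneg: "\<And>x. 0 \<le> f x"
    using dens by (simp add: is_density_def)
  let ?a = "power_weighted (p - 1) (\<lambda>y. f (\<nu> - y))"
  let ?b = "power_weighted (p - 1) (\<lambda>y. f (\<nu> + y))"
  have "R = \<infinity>"
  proof (rule support_interval_unbounded_above[OF supp, of "\<nu> + c"])
    show "f x \<noteq> 0" if "\<nu> + c < x" for x
      using that lt[rule_format, of "x - \<nu>"] f_nonneg[of "\<nu> - (x - \<nu>)"] by simp
  qed
  then have right: "indicator {y. 0 < y \<and> ereal y < R - ereal \<nu>} y * (y powr (p - 1) * f (\<nu> + y))
      = ?b y" for y
    by (simp add: power_weighted_def indicator_def)
  have left: "indicator {y. 0 < y \<and> ereal y < ereal \<nu> - L} y * (y powr (p - 1) * f (\<nu> - y))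
      = ?a y" for y
    using support_interval_vanishes_left[OF supp, of \<nu> y]
    by (auto simp: power_weighted_def indicator_def)
  note pmean = pmean_power_weighted_integrals[OF dens pD nu]
  have below: "?b y \<le> ?a y" if "y \<le> c" for y
    using that gt eq_c by (intro power_weighted_mono) (cases "y = c", auto)
  have above: "?a y \<le> ?b y" if "c < y" for y
    using that lt by (intro power_weighted_mono less_imp_le) auto
  have less: "?b y < ?a y" if "0 < y" "y < c" for y
    using that gt by (intro power_weighted_strict_mono) auto
  have dom: "cdf_of_density ?b x \<le> cdf_of_density ?a x" for x
    using pmean below above by (rule cdf_of_density_le_if_single_crossing)
  have strict: "cdf_of_density ?b c < cdf_of_density ?a c"
    using pmean(1,2) below less c_pos by (rule cdf_of_density_less)
  have "H = integral\<^sup>L lborel ?a"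
    unfolding H_def set_lebesgue_integral_def using left by simp
  moreover have "0 \<le> cdf_of_density ?b c" and "cdf_of_density ?a c \<le> integral\<^sup>L lborel ?a"
    using cdf_of_density_bounds(1)[OF pmean(2)] cdf_of_density_bounds(2)[OF pmean(1)]
    by (simp_all add: power_weighted_nonneg f_nonneg)
  ultimately have "0 < H"
    using strict by linarith
  then show ?thesis
    unfolding left right using dom strict by (rule strict_stoch_dom_cdf_of_density_divide)
qed

end
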